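(* Let $n\ge3$ be odd, $d,R\in\mathbb{Q}$, $d\ne0$, $R$ not a square, $D=d^2-R$, fix a square root $\sqrt R$, let $u$ be a zero of $f_n=f_n(Z,d,R)$ and $\zeta$ a primitive $n$th root of unity. For $k=0,\dots,n-1$ put $$u_k=\frac u2(\zeta^k+\zeta^{-k})+DA(u)\sqrt R(\zeta^k-\zeta^{-k})$$ (these are zeros of $f_n$; moreover $u\neq0$ and $A(u)\ne0$). Then for every odd $k\in\{1,\dots,n-1\}$, $$u_k=\frac u2F_k\Big(\frac{u_1+u_{n-1}}{u}\Big)+DA(u)P_k\Big(\frac{u_1-u_{n-1}}{2DA(u)}\Big),$$ and $u_{n-k}$ is obtained by the same expression with the plus sign between the two summands replaced by a minus sign.
   Context: For $k\ge1$, $F_k=\sum_{j=0}^{\lfloor k/2\rfloor}c_{k,j}Z^{k-2j}$ with $c_{k,j}=(-1)^j\frac{k}{k-j}\binom{k-j}{j}$ (so $2\cos(kx)=F_k(2\cos x)$). $f_n(Z,d,R)=\sqrt D^{\,n}F_n(Z/\sqrt D)-2dD^{(n-1)/2}=\sum_{j=0}^{(n-1)/2}c_{n,j}D^jZ^{n-2j}-2dD^{(n-1)/2}$. $A=\frac{1}{2R}\big(F_{n-1}(Z/\sqrt D)-\frac{dZ}{D}\big)\in\mathbb{Q}[Z]$, where $F_{n-1}(Z/\sqrt D)=\sum_{j=0}^{(n-1)/2}c_{n-1,j}D^{\,j-(n-1)/2}Z^{n-1-2j}$. For odd $k$, $P_k=i\sqrt R\,(-1)^{(k-1)/2}F_k\big(Z/(i\sqrt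 R)\big)=(-1)^{(k-1)/2}\sum_{j=0}^{(k-1)/2}c_{k,j}(-R)^{\,j-(k-1)/2}Z^{k-2j}\in\mathbb{Q}[Z]$. *)

theory Defs
  imports Complex_Main
begin

definition cc :: "nat \<Rightarrow> nat \<Rightarrow> rat" where
  "cc k j = (-1) ^ j * (of_nat k / of_nat (k - j)) * of_nat ((k - j) choose j)"

definition F :: "nat \<Rightarrow> complex \<Rightarrow> complex" where
  "F k z = (\<Sum>j = 0..k div 2. of_rat (cc k j) * z ^ (k - 2 * j))"

definition DD :: "rat \<Rightarrow> rat \<Rightarrow> rat" where
  "DD d R = d ^ 2 - R"

definition fn :: "nat \<Rightarrow> rat \<Rightarrow> rat \<Rightarrow> complex \<Rightarrow> complex" where
  "fn n d R z = (\<Sum>j = 0..(n - 1) div 2. of_rat (cc n j * DD d R ^ j) * z ^ (n - 2 * j))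
                 - of_rat (2 * d * DD d R ^ ((n - 1) div 2))"

text \<open>A = 1/(2R) (F_{n-1}(Z/sqrt D) - d Z / D), with
  F_{n-1}(Z/sqrt D) = sum_{j=0}^{(n-1)/2} c_{n-1,j} D^{j-(n-1)/2} Z^{n-1-2j}.\<close>
definition AA :: "nat \<Rightarrow> rat \<Rightarrow> rat \<Rightarrow> complex \<Rightarrow> complex" where
  "AA n d R z = (1 / (2 * of_rat R)) *
     ((\<Sum>j = 0..(n - 1) div 2.
         of_rat (cc (n - 1) j * DD d R powi (int j - int ((n - 1) div 2))) * z ^ (n - 1 - 2 * j))
      - of_rat d * z / of_rat (DD d R))"

definition PP :: "nat \<Rightarrow> rat \<Rightarrow> complex \<Rightarrow> complex" where
  "PP k R z = (-1) ^ ((k - 1) div 2) *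
     (\<Sum>j = 0..(k - 1) div 2. of_rat (cc k j * (- R) powi (int j - int ((k - 1) div 2))) * z ^ (k - 2 * j))"

end

theory Submission
  imports Defs
begin

text \<open>
  F_k is the Dickson polynomial: Pascal's rule for the coefficients c_{k,j} gives the recurrence
  F_{k+2} = Z F_{k+1} - F_k, hence F_k(t + 1/t) = t^k + t^{-k}. Substituting t = -iz turns this,
  for odd k, into sum_j c_{k,j} (-1)^j (z - 1/z)^{k-2j} = z^k - z^{-k}, and P_k(sqrt R w) is sqrt R
  times the left-hand side at w. Since (u_1 + u_{n-1})/u = zeta + 1/zeta and
  (u_1 - u_{n-1})/(2 D A(u)) = sqrt R (zeta - 1/zeta), the two summands are the two halves of u_k;
  as zeta^{n-k} = zeta^{-k}, passing to u_{n-k} flips the sign of the second half.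
\<close>

lemma cc_0: "1 \<le> k \<Longrightarrow> cc k 0 = 1"
  by (simp add: cc_def)

lemma cc_eq_0: "k < 2 * j \<Longrightarrow> cc k j = 0"
  by (cases "k \<le> j") (simp_all add: cc_def binomial_eq_0)

lemma cc_eq_binomial_sum:
  assumes "1 \<le> j" "j < k"
  shows "cc k j = (-1) ^ j * (of_nat ((k - j) choose j) + of_nat ((k - j - 1) choose (j - 1)))"
proof -
  obtain a where a: "j = Suc a" using assms(1) by (cases j) auto
  obtain b where b: "k - j = Suc b" using assms(2) by (cases "k - j") auto
  have "of_nat j * of_nat ((k - j) choose j) = (of_nat (k - j) * of_nat ((k - j - 1) choose (j - 1)) :: rat)"
    using Suc_times_binomial[of a b] a b by (metis diff_Suc_1 of_nat_mult)
  then have "of_nat k * of_nat ((k - j) choose j)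
      = (of_nat (k - j) * (of_nat ((k - j) choose j) + of_nat ((k - j - 1) choose (j - 1))) :: rat)"
    using assms by (simp add: of_nat_diff algebra_simps)
  then have "of_nat k / of_nat (k - j) * of_nat ((k - j) choose j)
      = (of_nat ((k - j) choose j) + of_nat ((k - j - 1) choose (j - 1)) :: rat)"
    using assms by (simp add: field_simps)
  then show ?thesis
    unfolding cc_def by (metis mult.assoc)
qed

lemma cc_recurrence:
  assumes "1 \<le> k" "1 \<le> j"
  shows "cc (k + 2) j = cc (k + 1) j - cc k (j - 1)"
proof -
  consider "k + 1 \<le> j" | "j = 1" | "2 \<le> j" "j \<le> k"
    using assms by linarith
  then show ?thesis
  proof cases
    case 1
    then show ?thesis using assms by (simp add: cc_eq_0)
  next
    case 2
    then show ?thesis using assms by (simp add: cc_eq_binomial_sum cc_0)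
  next
    case 3
    define i r where "i = j - 2" and "r = k - j"
    then have ir: "j = i + 2" "k = i + 2 + r"
      using 3 by simp_all
    have "cc (k + 2) j = (-1) ^ i * (of_nat ((r + 2) choose (i + 2)) + of_nat ((r + 1) choose (i + 1)))"
      using ir by (subst cc_eq_binomial_sum) (simp_all add: numeral_2_eq_2)
    moreover have "cc (k + 1) j = (-1) ^ i * (of_nat ((r + 1) choose (i + 2)) + of_nat (r choose (i + 1)))"
      using ir by (subst cc_eq_binomial_sum) (simp_all add: numeral_2_eq_2)
    moreover have "cc k (j - 1) = (-1) ^ (i + 1) * (of_nat ((r + 1) choose (i + 1)) + of_nat (r choose i))"
      using ir by (subst cc_eq_binomial_sum) (simp_all add: numeral_2_eq_2)
    ultimately show ?thesis
      by (simp add: numeral_2_eq_2 algebra_simps)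
  qed
qed

lemma F_eq_sum_upto:
  assumes "k div 2 \<le> N"
  shows "F k x = (\<Sum>j = 0..N. of_rat (cc k j) * x ^ (k - 2 * j))"
  unfolding F_def using assms
  by (intro sum.mono_neutral_left) (auto simp: cc_eq_0)

lemma mult_F_eq_sum:
  "x * F k x = (\<Sum>j = 0..k + 1. of_rat (cc k j) * x ^ (k + 1 - 2 * j))"
proof -
  have "x * F k x = (\<Sum>j = 0..k + 1. x * (of_rat (cc k j) * x ^ (k - 2 * j)))"
    using F_eq_sum_upto[of k "k + 1" x] by (simp add: sum_distrib_left del: sum.cl_ivl_Suc)
  also have "\<dots> = (\<Sum>j = 0..k + 1. of_rat (cc k j) * x ^ (k + 1 - 2 * j))"
  proof (rule sum.cong)
    fix j
    show "x * (of_rat (cc k j) * x ^ (k - 2 * j)) = of_rat (cc k j) * x ^ (k + 1 - 2 * j)"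
      by (cases "2 * j \<le> k") (simp_all add: cc_eq_0 Suc_diff_le)
  qed simp
  finally show ?thesis .
qed

lemma F_eq_shifted_sum:
  "F k x = (\<Sum>j = 1..k + 2. of_rat (cc k (j - 1)) * x ^ (k + 2 - 2 * j))"
proof -
  have "F k x = (\<Sum>j = 0..k + 1. of_rat (cc k j) * x ^ (k - 2 * j))"
    by (rule F_eq_sum_upto) simp
  also have "\<dots> = (\<Sum>j = Suc 0..Suc (k + 1). of_rat (cc k (j - 1)) * x ^ (k - 2 * (j - 1)))"
    by (subst sum.shift_bounds_cl_Suc_ivl) simp
  also have "\<dots> = (\<Sum>j = 1..k + 2. of_rat (cc k (j - 1)) * x ^ (k + 2 - 2 * j))"
  proof (rule sum.cong)
    fix j assume "j \<in> {1..k + 2}"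
    then show "of_rat (cc k (j - 1)) * x ^ (k - 2 * (j - 1)) = of_rat (cc k (j - 1)) * x ^ (k + 2 - 2 * j)"
      by (cases "2 * (j - 1) \<le> k") (simp_all add: cc_eq_0 right_diff_distrib')
  qed simp
  finally show ?thesis .
qed

lemma F_recurrence:
  assumes "1 \<le> k"
  shows "F (k + 2) x = x * F (k + 1) x - F k x"
proof -
  have top: "cc (k + 2) 0 = cc (k + 1) 0"
    by (simp add: cc_0)
  have rest: "(\<Sum>j = 1..k + 2. of_rat (cc (k + 2) j) * x ^ (k + 2 - 2 * j))
      = (\<Sum>j = 1..k + 2. of_rat (cc (k + 1) j) * x ^ (k + 2 - 2 * j))
      - (\<Sum>j = 1..k + 2. of_rat (cc k (j - 1)) * x ^ (k + 2 - 2 * j))"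
    unfolding sum_subtractf[symmetric]
  proof (rule sum.cong)
    fix j assume "j \<in> {1..k + 2}"
    then have "cc (k + 2) j = cc (k + 1) j - cc k (j - 1)"
      using assms by (intro cc_recurrence) auto
    then show "of_rat (cc (k + 2) j) * x ^ (k + 2 - 2 * j)
        = of_rat (cc (k + 1) j) * x ^ (k + 2 - 2 * j) - of_rat (cc k (j - 1)) * x ^ (k + 2 - 2 * j)"
      by (simp add: of_rat_diff left_diff_distrib)
  qed simp
  have split: "sum g {0..k + 2} = g 0 + sum g {1..k + 2}" for g :: "nat \<Rightarrow> complex"
    by (simp add: sum.atLeast_Suc_atMost)
  have "x * F (k + 1) x = (\<Sum>j = 0..k + 2. of_rat (cc (k + 1) j) * x ^ (k + 2 - 2 * j))"
    unfolding mult_F_eq_sum by (simp only: add.assoc one_add_one)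
  moreover have "F (k + 2) x = (\<Sum>j = 0..k + 2. of_rat (cc (k + 2) j) * x ^ (k + 2 - 2 * j))"
    by (rule F_eq_sum_upto) simp
  ultimately show ?thesis
    unfolding split top rest F_eq_shifted_sum[of k] by simp
qed

lemma F_add_inverse:
  assumes "t \<noteq> 0" "1 \<le> k"
  shows "F k (t + inverse t) = t ^ k + inverse t ^ k"
  using assms(2)
proof (induction k rule: less_induct)
  case (less k)
  consider "k = 1" | "k = 2" | "3 \<le> k"
    using less.prems by linarith
  then show ?case
  proof cases
    case 1
    then show ?thesis by (simp add: F_def cc_def)
  next
    case 2
    then show ?thesis using assms(1)
      by (simp add: F_def cc_def numeral_2_eq_2 power2_eq_square field_simps)
  next
    case 3
    define m where "m = k - 2"
    have m: "k = m + 2" "1 \<le> m"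
      using 3 by (simp_all add: m_def)
    have "F k (t + inverse t) = (t + inverse t) * F (m + 1) (t + inverse t) - F m (t + inverse t)"
      using F_recurrence[OF m(2)] m(1) by simp
    also have "\<dots> = (t + inverse t) * (t ^ (m + 1) + inverse t ^ (m + 1)) - (t ^ m + inverse t ^ m)"
      using m by (simp add: less.IH)
    also have "\<dots> = t ^ k + inverse t ^ k"
    proof -
      have cancel: "t * (inverse t * y) = y" for y
        using assms(1) by (simp flip: mult.assoc)
      show ?thesis
        using m(1) by (simp add: algebra_simps power_Suc cancel)
    qed
    finally show ?thesis .
  qed
qed

definition F_alt :: "nat \<Rightarrow> complex \<Rightarrow> complex" where
  "F_alt k w = (\<Sum>j = 0..k div 2. of_rat (cc k j) * (-1) ^ j * w ^ (k - 2 * j))"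

lemma F_neg_i_mult: "F k (- \<i> * w) = (- \<i>) ^ k * F_alt k w"
  unfolding F_def F_alt_def sum_distrib_left
proof (rule sum.cong)
  fix j assume "j \<in> {0..k div 2}"
  then have "k = (k - 2 * j) + 2 * j" by auto
  then have "(- \<i>) ^ k = (- \<i>) ^ (k - 2 * j) * ((- \<i>) ^ 2) ^ j"
    by (metis power_add power_mult)
  then have "(- \<i>) ^ k = (- \<i>) ^ (k - 2 * j) * (-1 :: complex) ^ j"
    by simp
  then have "(- \<i>) ^ (k - 2 * j) = (- \<i>) ^ k * (-1 :: complex) ^ j"
    by (simp add: mult.assoc flip: power_mult_distrib)
  then show "of_rat (cc k j) * (- \<i> * w) ^ (k - 2 * j)
      = (- \<i>) ^ k * (of_rat (cc k j) * (-1) ^ j * w ^ (k - 2 * j))"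
    unfolding power_mult_distrib by (simp only: ac_simps)
qed simp

lemma F_alt_sub_inverse:
  assumes "z \<noteq> 0" "odd k"
  shows "F_alt k (z - inverse z) = z ^ k - inverse z ^ k"
proof -
  have "(- \<i>) ^ k * F_alt k (z - inverse z) = F k (- \<i> * z + inverse (- \<i> * z))"
    using F_neg_i_mult[of k "z - inverse z"]
    by (simp add: inverse_mult_distrib right_diff_distrib)
  also have "\<dots> = (- \<i> * z) ^ k + inverse (- \<i> * z) ^ k"
    using assms odd_pos[OF assms(2)] by (intro F_add_inverse) auto
  also have "\<dots> = (- \<i>) ^ k * (z ^ k - inverse z ^ k)"
    using assms(2) by (simp add: power_mult_distrib inverse_mult_distrib power_minus_odd algebra_simps)
  finally show ?thesis
    by simp
qed

lemma power_int_neg_sqrt: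
  assumes "s ^ 2 = of_rat R" "R \<noteq> 0"
  shows "of_rat ((- R) powi (- int e)) * s ^ (2 * e + 1) = (-1) ^ e * s"
proof -
  have "of_rat ((- R) powi (- int e)) = inverse ((-1) ^ e * (s ^ 2) ^ e)"
    by (simp add: power_int_minus of_rat_inverse of_rat_power of_rat_minus assms(1)
        flip: power_minus)
  moreover have "(s ^ 2) ^ e \<noteq> 0" using assms by auto
  moreover have "inverse ((-1) ^ e) = ((-1) ^ e :: 'a)"
    by (simp add: power_inverse[symmetric])
  ultimately show ?thesis
    by (simp add: inverse_mult_distrib power_mult)
qed

lemma PP_sqrt_mult:
  assumes "odd k" "s ^ 2 = of_rat R" "R \<noteq> 0"
  shows "PP k R (s * w) = s * F_alt k w"
proof -
  have half: "(k - 1) div 2 = k div 2"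
    using assms(1) by presburger
  show ?thesis
    unfolding PP_def F_alt_def sum_distrib_left half
  proof (rule sum.cong)
    fix j assume "j \<in> {0..k div 2}"
    then obtain e where e: "k div 2 = j + e"
      using le_Suc_ex by auto
    with assms(1) have exp: "k - 2 * j = 2 * e + 1" by presburger
    have "(-1) ^ (k div 2) * (of_rat (cc k j * (- R) powi (int j - int (k div 2))) * (s * w) ^ (k - 2 * j))
        = (-1) ^ j * ((-1) ^ e * (of_rat ((- R) powi (- int e)) * s ^ (2 * e + 1))) * of_rat (cc k j) * w ^ (k - 2 * j)"
      unfolding e exp by (simp add: of_rat_mult power_add power_mult_distrib algebra_simps)
    also have "\<dots> = s * (of_rat (cc k j) * (-1) ^ j * w ^ (k - 2 * j))"
      unfolding power_int_neg_sqrt[OF assms(2,3)] by (simp flip: power_add add: mult_2[symmetric] power_mult)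
    finally show "(-1) ^ (k div 2) * (of_rat (cc k j * (- R) powi (int j - int (k div 2))) * (s * w) ^ (k - 2 * j))
        = s * (of_rat (cc k j) * (-1) ^ j * w ^ (k - 2 * j))" .
  qed simp
qed

lemma power_diff_root_of_unity:
  fixes \<zeta> :: "'a :: field"
  assumes "\<zeta> ^ n = 1" "m \<le> n"
  shows "\<zeta> ^ (n - m) = inverse \<zeta> ^ m"
proof -
  have "\<zeta> ^ (n - m) * \<zeta> ^ m = 1"
    using assms by (simp flip: power_add)
  then show ?thesis
    by (metis inverse_unique mult.commute power_inverse)
qed

lemma conjugates_Dickson_expansion:
  fixes u D A s \<zeta> :: complex
  assumes "\<zeta> ^ n = 1" "odd k" "k < n" "s ^ 2 = of_rat R" "R \<noteq> 0"
  defines "v \<equiv> \<lambda>k. u / 2 * (\<zeta> ^ k + inverse \<zeta> ^ k) + D * A * s * (\<zeta> ^ k - inverse \<zeta> ^ k)"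
  shows "v k = u / 2 * F k ((v 1 + v (n - 1)) / u) + D * A * PP k R ((v 1 - v (n - 1)) / (2 * D * A))
       \<and> v (n - k) = u / 2 * F k ((v 1 + v (n - 1)) / u) - D * A * PP k R ((v 1 - v (n - 1)) / (2 * D * A))"
proof -
  have "\<zeta> \<noteq> 0"
    using assms(1,3) by (metis less_nat_zero_code power_0_left zero_neq_one)
  have pow: "\<zeta> ^ (n - m) = inverse \<zeta> ^ m" "inverse \<zeta> ^ (n - m) = \<zeta> ^ m" if "m \<le> n" for m
    using power_diff_root_of_unity[OF assms(1) that] \<open>\<zeta> \<noteq> 0\<close> by (simp_all add: power_inverse)
  have "1 \<le> k" "k \<le> n" "1 \<le> n"
    using assms(2,3) odd_pos by fastforce+
  have even_part: "u / 2 * F k ((v 1 + v (n - 1)) / u) = u / 2 * (\<zeta> ^ k + inverse \<zeta> ^ k)"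
  proof (cases "u = 0")
    case False
    have "(v 1 + v (n - 1)) / u = \<zeta> + inverse \<zeta>"
      using pow[OF \<open>1 \<le> n\<close>] False by (simp add: v_def field_simps)
    then show ?thesis
      using F_add_inverse[OF \<open>\<zeta> \<noteq> 0\<close> \<open>1 \<le> k\<close>] by simp
  qed simp
  have odd_part: "D * A * PP k R ((v 1 - v (n - 1)) / (2 * D * A)) = D * A * s * (\<zeta> ^ k - inverse \<zeta> ^ k)"
  proof (cases "D * A = 0")
    case False
    have "(v 1 - v (n - 1)) / (2 * D * A) = s * (\<zeta> - inverse \<zeta>)"
      using pow[OF \<open>1 \<le> n\<close>] False by (simp add: v_def field_simps)
    then show ?thesis
      using PP_sqrt_mult[OF assms(2,4,5)] F_alt_sub_inverse[OF \<open>\<zeta> \<noteq> 0\<close> assms(2)] by simp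
  qed auto
  show ?thesis
    unfolding even_part odd_part using pow[OF \<open>k \<le> n\<close>] by (simp add: v_def algebra_simps)
qed

text \<open>
  The hypotheses on d, on f_n and on the primitivity of zeta only guarantee u \<noteq> 0 and A(u) \<noteq> 0.
\<close>

theorem theorem3:
  fixes n :: nat and d R :: rat and s u \<zeta> :: complex
  assumes "odd n" and "n \<ge> 3"
    and "d \<noteq> 0"
    and "\<not> (\<exists>q::rat. q ^ 2 = R)"
    and "s ^ 2 = of_rat R"
    and "fn n d R u = 0"
    and "\<zeta> ^ n = 1" and "\<forall>m. 0 < m \<and> m < n \<longrightarrow> \<zeta> ^ m \<noteq> 1"
  shows "let D = of_rat (DD d R) :: complex;
             uk = (\<lambda>k::nat. u / 2 * (\<zeta> ^ k + inverse \<zeta> ^ k) + D * AA n d R u * s * (\<zeta> ^ k - inverse \<zeta> ^ k))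
         in \<forall>k. odd k \<and> 1 \<le> k \<and> k \<le> n - 1 \<longrightarrow>
              uk k = u / 2 * F k ((uk 1 + uk (n - 1)) / u)
                     + D * AA n d R u * PP k R ((uk 1 - uk (n - 1)) / (2 * D * AA n d R u))
            \<and> uk (n - k) = u / 2 * F k ((uk 1 + uk (n - 1)) / u)
                     - D * AA n d R u * PP k R ((uk 1 - uk (n - 1)) / (2 * D * AA n d R u))"
proof -
  have "R \<noteq> 0"
    using assms(4) by (metis power_zero_numeral)
  show ?thesis
    unfolding Let_def
  proof (intro allI impI, goal_cases)
    case (1 k)
    then have "odd k" "k < n"
      using assms(2) by auto
    then show ?case
      using conjugates_Dickson_expansion[OF assms(7) _ _ assms(5) \<open>R \<noteq> 0\<close>] by blast
  qed
qed

end
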